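(* Let $n,m\ge1$ and $A\subseteq\Omega_n$. Then $\mu_{n+m}(A\times\{0,1\}^m)=\mu_n(A)$.
   Context: For $n\ge1$, $\Omega_n$ is the set of strings $\omega=\alpha_0\alpha_1\cdots\alpha_n$ with $\alpha_k\in\{0,1\}$, $\alpha_0=0$. For $\omega=\alpha_0\cdots\alpha_n$, $\omega'=\alpha'_0\cdots\alpha'_n\in\Omega_n$ let $D^n(\omega,\omega')=2^{-n}\prod_{k=1}^n i^{|\alpha_k-\alpha_{k-1}|}\prod_{k=1}^n i^{-|\alpha'_k-\alpha'_{k-1}|}\,\delta_{\alpha_n\alpha'_n}$ ($i=\sqrt{-1}$), and for $A\subseteq\Omega_n$ let $\mu_n(A)=\sum_{\omega,\omega'\in A}D^n(\omega,\omega')$. For $A\subseteq\Omega_n$, $A\times\{0,1\}^m\subseteq\Omega_{n+m}$ is the set of strings obtained by appending to the right of some $\omega\in A$ an arbitrary string of $m$ bits. *)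

theory Defs
  imports Complex_Main
begin

text \<open>Bit strings \<alpha>_0 ... \<alpha>_n are modelled as lists of naturals of length n+1
  with entries in {0,1}; index k of the list is \<alpha>_k.\<close>

definition Omega :: "nat \<Rightarrow> nat list set" where
  "Omega n = {w. length w = n + 1 \<and> set w \<subseteq> {0, 1} \<and> w ! 0 = 0}"

definition Dn :: "nat \<Rightarrow> nat list \<Rightarrow> nat list \<Rightarrow> complex" where
  "Dn n w w' =
     (1 / 2 ^ n) *
     (\<Prod>k\<in>{1..n}. \<i> ^ nat \<bar>int (w ! k) - int (w ! (k - 1))\<bar>) *
     (\<Prod>k\<in>{1..n}. \<i> powi (- \<bar>int (w' ! k) - int (w' ! (k - 1))\<bar>)) *
     (if w ! n = w' ! n then 1 else 0)"

definition mu :: "nat \<Rightarrow> nat list set \<Rightarrow> complex" where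
  "mu n A = (\<Sum>w\<in>A. \<Sum>w'\<in>A. Dn n w w')"

text \<open>A \<times> {0,1}^m: append an arbitrary string of m bits to the right.\<close>
definition ext :: "nat list set \<Rightarrow> nat \<Rightarrow> nat list set" where
  "ext A m = {w @ v | w v. w \<in> A \<and> length v = m \<and> set v \<subseteq> {0, 1}}"

end

theory Submission
  imports Defs
begin

text \<open>Appending one bit c to \<omega> and d to \<omega>' multiplies D by
  \<open>i^|c-\<alpha>_n| i^-|d-\<alpha>'_n| / 2\<close> and replaces \<open>\<delta>_{\<alpha>_n \<alpha>'_n}\<close> by \<open>\<delta>_{cd}\<close>.
  Summing over the two new bits, \<open>\<Sum>_c i^|c-a| i^-|c-b| = 2 \<delta>_{ab}\<close> for bits a, b,
  so the factor 2 cancels the extra 1/2 and the old \<open>\<delta>_{\<alpha>_n \<alpha>'_n}\<close> reappears: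
  \<open>\<mu>_{n+1}(A \<times> {0,1}) = \<mu>_n(A)\<close>.\<close>

lemma prod_atLeastAtMost_snoc:
  assumes "length w = n + 1"
  shows "(\<Prod>k\<in>{1..Suc n}. F ((w @ [c]) ! k) ((w @ [c]) ! (k - 1))) =
         (\<Prod>k\<in>{1..n}. F (w ! k) (w ! (k - 1))) * F c (w ! n)"
proof -
  have "(\<Prod>k\<in>{1..n}. F ((w @ [c]) ! k) ((w @ [c]) ! (k - 1))) =
        (\<Prod>k\<in>{1..n}. F (w ! k) (w ! (k - 1)))"
    using assms by (intro prod.cong) (auto simp: nth_append)
  moreover have "{1..Suc n} = insert (Suc n) {1..n}" by auto
  ultimately show ?thesis
    using assms by (simp add: nth_append mult.commute)
qed

lemma sum_bit_phases:
  assumes "a \<in> {0, 1::nat}" "b \<in> {0, 1::nat}"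
  shows "(\<Sum>c\<in>{0, 1::nat}. \<i> ^ nat \<bar>int c - int a\<bar> * \<i> powi (- \<bar>int c - int b\<bar>)) =
         (if a = b then 2 else 0)"
  using assms by (auto simp: power_int_minus)

lemma sum_Dn_Suc_snoc:
  assumes "length w = n + 1" "length w' = n + 1" "set w \<subseteq> {0, 1}" "set w' \<subseteq> {0, 1}"
  shows "(\<Sum>c\<in>{0, 1::nat}. \<Sum>d\<in>{0, 1::nat}. Dn (Suc n) (w @ [c]) (w' @ [d])) = Dn n w w'"
proof -
  define P where "P = (\<Prod>k\<in>{1..n}. \<i> ^ nat \<bar>int (w ! k) - int (w ! (k - 1))\<bar>)"
  define Q where "Q = (\<Prod>k\<in>{1..n}. \<i> powi (- \<bar>int (w' ! k) - int (w' ! (k - 1))\<bar>))"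
  define phase where
    "phase c d = \<i> ^ nat \<bar>int c - int (w ! n)\<bar> * \<i> powi (- \<bar>int d - int (w' ! n)\<bar>)"
    for c d :: nat
  have Dn_snoc: "Dn (Suc n) (w @ [c]) (w' @ [d]) =
      1 / 2 ^ Suc n * P * Q * phase c d * (if c = d then 1 else 0)" for c d
    unfolding Dn_def P_def Q_def phase_def
    using prod_atLeastAtMost_snoc[OF assms(1), of "\<lambda>x y. \<i> ^ nat \<bar>int x - int y\<bar>" c]
          prod_atLeastAtMost_snoc[OF assms(2), of "\<lambda>x y. \<i> powi (- \<bar>int x - int y\<bar>)" d]
          assms(1,2)
    by (simp add: nth_append)
  have last_bits: "w ! n \<in> {0, 1}" "w' ! n \<in> {0, 1}"
    using assms nth_mem[of n w] nth_mem[of n w'] by (auto simp del: nth_mem)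
  have "(\<Sum>c\<in>{0, 1::nat}. \<Sum>d\<in>{0, 1::nat}. Dn (Suc n) (w @ [c]) (w' @ [d])) =
        1 / 2 ^ Suc n * P * Q * (\<Sum>c\<in>{0, 1::nat}. phase c c)"
    by (simp add: Dn_snoc algebra_simps add_divide_distrib)
  also have "\<dots> = Dn n w w'"
    unfolding phase_def sum_bit_phases[OF last_bits] Dn_def P_def Q_def by simp
  finally show ?thesis .
qed

lemma ext_0 [simp]: "ext A 0 = A"
  unfolding ext_def by auto

lemma ext_1: "ext A 1 = (\<lambda>(w, c). w @ [c]) ` (A \<times> {0, 1})"
  unfolding ext_def
  apply (auto simp: length_Suc_conv)
  subgoal for w by (intro exI[of _ w] exI[of _ "[0]"]) simp
  subgoal for w by (intro exI[of _ w] exI[of _ "[1]"]) simp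
  done

lemma ext_Suc: "ext A (Suc m) = ext (ext A m) 1"
proof
  show "ext A (Suc m) \<subseteq> ext (ext A m) 1"
  proof
    fix u assume "u \<in> ext A (Suc m)"
    then obtain w v where u: "u = w @ v" "w \<in> A" "length v = Suc m" "set v \<subseteq> {0, 1}"
      unfolding ext_def by auto
    then obtain v' x where v: "v = v' @ [x]" by (metis length_Suc_conv_rev)
    have "w @ v' \<in> ext A m" using u v unfolding ext_def by auto
    with u v show "u \<in> ext (ext A m) 1"
      unfolding ext_def[of "ext A m"] by (intro CollectI exI[of _ "w @ v'"] exI[of _ "[x]"]) auto
  qed
next
  show "ext (ext A m) 1 \<subseteq> ext A (Suc m)"
  proof
    fix u assume "u \<in> ext (ext A m) 1"
    then obtain z v where u: "u = z @ v" "z \<in> ext A m" "length v = 1" "set v \<subseteq> {0, 1}"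
      unfolding ext_def[of "ext A m"] by blast
    then obtain w y where z: "z = w @ y" "w \<in> A" "length y = m" "set y \<subseteq> {0, 1}"
      unfolding ext_def by blast
    show "u \<in> ext A (Suc m)"
      unfolding ext_def by (intro CollectI exI[of _ w] exI[of _ "y @ v"]) (use u z in auto)
  qed
qed

lemma ext_subset_Omega:
  assumes "A \<subseteq> Omega n"
  shows "ext A m \<subseteq> Omega (n + m)"
proof
  fix u assume "u \<in> ext A m"
  then obtain w v where "u = w @ v" "w \<in> A" "length v = m" "set v \<subseteq> {0, 1}"
    unfolding ext_def by blast
  with assms show "u \<in> Omega (n + m)"
    unfolding Omega_def by (auto simp: nth_append)
qed

lemma mu_Suc_ext_1:
  assumes "A \<subseteq> Omega n"
  shows "mu (Suc n) (ext A 1) = mu n A"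
proof -
  have inj: "inj_on (\<lambda>(w, c). w @ [c]) (A \<times> {0::nat, 1})"
    unfolding inj_on_def by auto
  have "mu (Suc n) (ext A 1) =
        (\<Sum>(w, c)\<in>A \<times> {0::nat, 1}. \<Sum>(w', d)\<in>A \<times> {0::nat, 1}. Dn (Suc n) (w @ [c]) (w' @ [d]))"
    unfolding mu_def ext_1 sum.reindex[OF inj] by (simp add: case_prod_unfold)
  also have "\<dots> = (\<Sum>w\<in>A. \<Sum>w'\<in>A. \<Sum>c\<in>{0::nat, 1}. \<Sum>d\<in>{0::nat, 1}. Dn (Suc n) (w @ [c]) (w' @ [d]))"
    unfolding sum.cartesian_product[symmetric] by (rule sum.cong[OF refl], rule sum.swap)
  also have "\<dots> = (\<Sum>w\<in>A. \<Sum>w'\<in>A. Dn n w w')"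
    using assms by (intro sum.cong[OF refl] sum_Dn_Suc_snoc) (auto simp: Omega_def)
  finally show ?thesis unfolding mu_def .
qed

lemma mu_ext:
  assumes "A \<subseteq> Omega n"
  shows "mu (n + m) (ext A m) = mu n A"
proof (induction m)
  case (Suc m)
  have "mu (n + Suc m) (ext A (Suc m)) = mu (Suc (n + m)) (ext (ext A m) 1)"
    by (simp only: ext_Suc add_Suc_right)
  also have "\<dots> = mu (n + m) (ext A m)"
    using mu_Suc_ext_1 ext_subset_Omega[OF assms] .
  finally show ?case using Suc.IH by simp
qed simp

theorem corollary3p2:
  fixes n m :: nat and A :: "nat list set"
  assumes "n \<ge> 1" and "m \<ge> 1" and "A \<subseteq> Omega n"
  shows "mu (n + m) (ext A m) = mu n A"
  using assms(3) by (rule mu_ext)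

end
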